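(* Let $C$ be a conformal algebra whose coefficient algebra $\operatorname{Coeff}C$ is commutative. Then $\operatorname{Coeff}C$ is a Jordan algebra (i.e. $C$ is a Jordan conformal algebra) if and only if for all $a,b,c,d\in C$ and all integers $n,m,l\ge0$: $$a_{(n)}(b_{(m)}(c_{(l)}d))+\sum_{s_1,s_2\ge0}\binom{n}{s_1}\binom{m}{s_2}\big(b_{(m-s_2)}(a_{(n-s_1)}c)\big)_{(l+s_1+s_2)}d+c_{(l)}(b_{(m)}(a_{(n)}d))$$ $$=\sum_{s\ge0}\binom ns(a_{(n-s)}b)_{(m+s)}(c_{(l)}d)+\sum_{s\ge0}\binom ns(a_{(n-s)}c)_{(l+s)}(b_{(m)}d)+\sum_{s\ge0}\binom ls(c_{(l-s)}b)_{(m+s)}(a_{(n)}d).$$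
   Context: $\Bbbk$ is a field of characteristic $0$ and $H=\Bbbk[D]$. A conformal algebra is a unital left $H$-module $C$ with bilinear operations $a_{(n)}b$ ($n\ge0$) such that $a_{(n)}b=0$ for $n\gg0$, $(Da)_{(n)}b=-na_{(n-1)}b$, $a_{(n)}(Db)=D(a_{(n)}b)+na_{(n-1)}b$. Its coefficient algebra is $\operatorname{Coeff}C=\Bbbk[t,t^{-1}]\otimes_HC$, where $\Bbbk[t,t^{-1}]$ is a right $H$-module via $t^kD=-kt^{k-1}$; writing $a(k)=t^k\otimes_Ha$, the multiplication is $a(k)b(r)=\sum_{s\ge0}\binom ks(a_{(s)}b)(k+r-s)$. An algebra is Jordan if it is commutative and satisfies $((x x)y)x=(xx)(yx)$. Binomial coefficients $\binom ns$ with $s>n$ are zero. *)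

theory Defs
  imports Complex_Main
begin

text \<open>A conformal algebra over a field k of characteristic 0: a k-vector space C
(scalar multiplication sc), a linear map D (the action of H = k[D]), and
bilinear n-products pr n a b = a_(n) b, satisfying locality and sesquilinearity.\<close>

definition conformal_algebra ::
  "('k::field_char_0 \<Rightarrow> 'c::ab_group_add \<Rightarrow> 'c) \<Rightarrow> ('c \<Rightarrow> 'c) \<Rightarrow> (nat \<Rightarrow> 'c \<Rightarrow> 'c \<Rightarrow> 'c) \<Rightarrow> bool"
where
  "conformal_algebra sc D pr \<longleftrightarrow>
     vector_space sc \<and>
     Vector_Spaces.linear sc sc D \<and>
     (\<forall>n a. Vector_Spaces.linear sc sc (pr n a)) \<and>
     (\<forall>n b. Vector_Spaces.linear sc sc (\<lambda>a. pr n a b)) \<and>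
     (\<forall>a b. \<exists>N. \<forall>n\<ge>N. pr n a b = 0) \<and>
     (\<forall>n a b. pr n (D a) b = - sc (of_nat n) (pr (n - 1) a b)) \<and>
     (\<forall>n a b. pr n a (D b) = D (pr n a b) + sc (of_nat n) (pr (n - 1) a b))"

text \<open>Elements of k[t,t^-1] \<otimes>_k C are represented as finitely supported
functions f :: int \<Rightarrow> C, f = \<Sum>_k t^k \<otimes> f k.\<close>

definition fin_supp :: "(int \<Rightarrow> 'c::zero) \<Rightarrow> bool" where
  "fin_supp f \<longleftrightarrow> finite {k. f k \<noteq> 0}"

text \<open>Bilinear extension of a(k) b(r) = \<Sum>_s binom(k,s) (a_(s) b)(k+r-s).\<close>

definition coeff_mul ::
  "('k::field_char_0 \<Rightarrow> 'c::ab_group_add \<Rightarrow> 'c) \<Rightarrow> (nat \<Rightarrow> 'c \<Rightarrow> 'c \<Rightarrow> 'c)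
    \<Rightarrow> (int \<Rightarrow> 'c) \<Rightarrow> (int \<Rightarrow> 'c) \<Rightarrow> (int \<Rightarrow> 'c)"
where
  "coeff_mul sc pr f g = (\<lambda>j. \<Sum>k\<in>{k. f k \<noteq> 0}. \<Sum>r\<in>{r. g r \<noteq> 0}.
      if j \<le> k + r
      then sc ((of_int k :: 'k) gchoose nat (k + r - j)) (pr (nat (k + r - j)) (f k) (g r))
      else 0)"

text \<open>Generators of the kernel of k[t,t^-1] \<otimes>_k C \<rightarrow> k[t,t^-1] \<otimes>_H C:
t^k \<otimes> D a - (t^k D) \<otimes> a = (D a)(k) + k a(k-1).\<close>

definition coeff_gen ::
  "('k::field_char_0 \<Rightarrow> 'c::ab_group_add \<Rightarrow> 'c) \<Rightarrow> ('c \<Rightarrow> 'c) \<Rightarrow> 'c \<Rightarrow> int \<Rightarrow> (int \<Rightarrow> 'c)"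
where
  "coeff_gen sc D a k = (\<lambda>j. if j = k then D a else if j = k - 1 then sc (of_int k) a else 0)"

inductive_set coeff_rel ::
  "('k::field_char_0 \<Rightarrow> 'c::ab_group_add \<Rightarrow> 'c) \<Rightarrow> ('c \<Rightarrow> 'c) \<Rightarrow> (int \<Rightarrow> 'c) set"
  for sc D
where
  zero: "(\<lambda>_. 0) \<in> coeff_rel sc D"
| step: "f \<in> coeff_rel sc D \<Longrightarrow> (\<lambda>j. f j + coeff_gen sc D a k j) \<in> coeff_rel sc D"

text \<open>Coeff C = (k[t,t^-1] \<otimes>_k C) / coeff_rel; identities in Coeff C are
stated on representatives modulo coeff_rel.\<close>

definition coeff_commutative ::
  "('k::field_char_0 \<Rightarrow> 'c::ab_group_add \<Rightarrow> 'c) \<Rightarrow> ('c \<Rightarrow> 'c) \<Rightarrow> (nat \<Rightarrow> 'c \<Rightarrow> 'c \<Rightarrow> 'c) \<Rightarrow> bool"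
where
  "coeff_commutative sc D pr \<longleftrightarrow>
     (\<forall>f g. fin_supp f \<longrightarrow> fin_supp g \<longrightarrow>
        (\<lambda>j. coeff_mul sc pr f g j - coeff_mul sc pr g f j) \<in> coeff_rel sc D)"

definition coeff_jordan ::
  "('k::field_char_0 \<Rightarrow> 'c::ab_group_add \<Rightarrow> 'c) \<Rightarrow> ('c \<Rightarrow> 'c) \<Rightarrow> (nat \<Rightarrow> 'c \<Rightarrow> 'c \<Rightarrow> 'c) \<Rightarrow> bool"
where
  "coeff_jordan sc D pr \<longleftrightarrow> coeff_commutative sc D pr \<and>
     (\<forall>x y. fin_supp x \<longrightarrow> fin_supp y \<longrightarrow>
        (\<lambda>j. coeff_mul sc pr (coeff_mul sc pr (coeff_mul sc pr x x) y) x j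
             - coeff_mul sc pr (coeff_mul sc pr x x) (coeff_mul sc pr y x) j) \<in> coeff_rel sc D)"

end

theory Submission
  imports Defs "HOL-Library.Function_Algebras" "HOL-Computational_Algebra.Formal_Power_Series"
begin

text \<open>\<open>Coeff C\<close> is the quotient of the finitely supported Laurent series \<open>k[t, t\<^sup>-\<^sup>1] \<otimes> C\<close> by the
  image of the total derivative \<open>D \<otimes> 1 + 1 \<otimes> d/dt\<close>; a relation times anything is \<open>0\<close>, and
  anything times a relation is a relation. Given commutativity, the Jordan identity is equivalent
  (characteristic \<open>0\<close>, polarization) to its full linearization, which modulo relations is twice
  \<open>a(b(cd)) + (b(ac))d + c(b(ad)) - (ab)(cd) - (ac)(bd) - (cb)(ad)\<close>. On monomials
  \<open>a(n), b(m), c(l), d(k)\<close> this form is the series whose coefficient at \<open>t\<^bsup>n+m+l+k-w\<^esup>\<close> is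
  \<open>\<Sum>\<^bsub>u+s+t=w\<^esub> (n choose u) (m choose s) (l choose t) (L - R)(u, s, t)\<close>, where \<open>L\<close> and \<open>R\<close> are the
  two sides of the stated identity. So the identity makes the form vanish on monomials, hence
  everywhere. Conversely, for \<open>n, m, l \<ge> 0\<close> and \<open>k = -1\<close> the top nonzero coefficient is
  \<open>(L - R)(n, m, l)\<close> at \<open>t\<^sup>-\<^sup>1\<close>, and a relation vanishing below \<open>t\<^sup>-\<^sup>1\<close> also vanishes at \<open>t\<^sup>-\<^sup>1\<close>.\<close>

section \<open>Finitely supported Laurent series\<close>

lemma fin_supp_zero [simp]: "fin_supp (0 :: int \<Rightarrow> 'c::zero)"
  by (simp add: fin_supp_def)

lemma fin_supp_add:
  fixes f g :: "int \<Rightarrow> 'c::monoid_add"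
  assumes "fin_supp f" "fin_supp g"
  shows "fin_supp (f + g)"
proof -
  have "{k. (f + g) k \<noteq> 0} \<subseteq> {k. f k \<noteq> 0} \<union> {k. g k \<noteq> 0}" by auto
  then show ?thesis using assms unfolding fin_supp_def by (meson finite_UnI finite_subset)
qed

lemma fin_supp_uminus: "fin_supp (- f) \<longleftrightarrow> fin_supp (f :: int \<Rightarrow> 'c::group_add)"
  by (simp add: fin_supp_def)

lemma fin_supp_sum:
  "(\<And>i. i \<in> I \<Longrightarrow> fin_supp (F i :: int \<Rightarrow> 'c::comm_monoid_add)) \<Longrightarrow> fin_supp (sum F I)"
  by (induct I rule: infinite_finite_induct) (auto simp: fin_supp_add)

definition lmonom :: "'c::zero \<Rightarrow> int \<Rightarrow> int \<Rightarrow> 'c" where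
  "lmonom a k = (\<lambda>j. if j = k then a else 0)"

lemma fin_supp_lmonom [simp]: "fin_supp (lmonom a k)"
  unfolding fin_supp_def lmonom_def by (rule finite_subset[of _ "{k}"]) auto

lemma sum_fun_apply: "(\<Sum>i\<in>I. F i) x = (\<Sum>i\<in>I. F i x)"
  by (induct I rule: infinite_finite_induct) auto

lemma fin_supp_eq_sum_lmonom:
  fixes g :: "int \<Rightarrow> 'c::comm_monoid_add"
  assumes "fin_supp g"
  shows "g = (\<Sum>k\<in>{k. g k \<noteq> 0}. lmonom (g k) k)"
proof
  fix j
  have "finite {k. g k \<noteq> 0}" using assms unfolding fin_supp_def .
  then show "g j = (\<Sum>k\<in>{k. g k \<noteq> 0}. lmonom (g k) k) j"
    by (simp add: lmonom_def sum.If_cases[symmetric] sum.delta' sum_fun_apply)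
qed

lemma fin_supp_induct [consumes 1, case_names zero lmonom add]:
  fixes x :: "int \<Rightarrow> 'c::comm_monoid_add"
  assumes "fin_supp x"
    and "P 0"
    and "\<And>a k. P (lmonom a k)"
    and "\<And>f g. fin_supp f \<Longrightarrow> fin_supp g \<Longrightarrow> P f \<Longrightarrow> P g \<Longrightarrow> P (f + g)"
  shows "P x"
proof -
  have "P (\<Sum>k\<in>I. lmonom (x k) k)" if "finite I" for I
    using that
  proof (induct I rule: finite_induct)
    case (insert i I)
    then show ?case
      unfolding sum.insert[OF insert(1,2)] by (intro assms(4) fin_supp_sum) (auto intro: assms(3))
  qed (simp only: sum.empty assms(2))
  then show ?thesis
    using assms(1) fin_supp_eq_sum_lmonom[OF assms(1)] unfolding fin_supp_def by metis
qed

lemma fin_supp_additive_closed: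
  fixes x :: "int \<Rightarrow> 'c::comm_monoid_add" and F :: "(int \<Rightarrow> 'c) \<Rightarrow> 'b::plus"
  assumes "fin_supp x"
    and "\<And>f g. fin_supp f \<Longrightarrow> fin_supp g \<Longrightarrow> F (f + g) = F f + F g"
    and "F 0 \<in> S" "\<And>a k. F (lmonom a k) \<in> S" "\<And>u v. u \<in> S \<Longrightarrow> v \<in> S \<Longrightarrow> u + v \<in> S"
  shows "F x \<in> S"
  using fin_supp_induct[of x "\<lambda>x. F x \<in> S"] assms by simp

text \<open>\<open>series_from T q\<close> is \<open>\<Sum>\<^sub>w t\<^bsup>T - w\<^esup> \<otimes> q w\<close>: its coefficients are listed downwards from
  the top exponent \<open>T\<close>, which is the form in which products of monomials come out.\<close>

definition series_from :: "int \<Rightarrow> (nat \<Rightarrow> 'c::zero) \<Rightarrow> int \<Rightarrow> 'c" where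
  "series_from T q = (\<lambda>j. if j \<le> T then q (nat (T - j)) else 0)"

lemma fin_supp_series_from:
  assumes "finite {w. q w \<noteq> 0}"
  shows "fin_supp (series_from T q)"
proof -
  have "{j. series_from T q j \<noteq> 0} \<subseteq> (\<lambda>w. T - int w) ` {w. q w \<noteq> 0}"
    by (auto simp: series_from_def split: if_splits intro!: image_eqI[where x = "nat (T - _)"])
  then show ?thesis unfolding fin_supp_def using assms finite_subset by blast
qed

lemma lmonom_eq_series_from: "lmonom a k = series_from k (\<lambda>w. if w = 0 then a else 0)"
  by (auto simp: lmonom_def series_from_def)

lemma series_from_add:
  fixes p q :: "nat \<Rightarrow> 'c::monoid_add"
  shows "series_from T p + series_from T q = series_from T (\<lambda>w. p w + q w)"
  by (rule ext) (simp add: series_from_def)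

lemma series_from_diff:
  fixes p q :: "nat \<Rightarrow> 'c::group_add"
  shows "series_from T p - series_from T q = series_from T (\<lambda>w. p w - q w)"
  by (rule ext) (simp add: series_from_def)

lemma series_from_cong: "T = T' \<Longrightarrow> (\<And>w. p w = q w) \<Longrightarrow> series_from T p = series_from T' q"
  by (metis ext)

lemma series_from_zero [simp]: "series_from T (\<lambda>w. 0) = 0"
  by (auto simp: series_from_def)

section \<open>Compositions of a number into three parts and binomial identities\<close>

definition compositions3 :: "nat \<Rightarrow> (nat \<times> nat \<times> nat) set" where
  "compositions3 w = {(u, s, t). u + s + t = w}"

lemma finite_compositions3 [simp]: "finite (compositions3 w)"
  by (rule finite_subset[of _ "{..w} \<times> {..w} \<times> {..w}"]) (auto simp: compositions3_def)

lemma sum_compositions3_swap13: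
  "(\<Sum>(u, s, t)\<in>compositions3 w. F u s t) = (\<Sum>(u, s, t)\<in>compositions3 w. (F t s u :: 'a::comm_monoid_add))"
  by (rule sum.reindex_bij_witness[where i = "\<lambda>(u, s, t). (t, s, u)" and j = "\<lambda>(u, s, t). (t, s, u)"])
     (auto simp: compositions3_def)

lemma sum_compositions3_swap23:
  "(\<Sum>(u, s, t)\<in>compositions3 w. F u s t) = (\<Sum>(u, s, t)\<in>compositions3 w. (F u t s :: 'a::comm_monoid_add))"
  by (rule sum.reindex_bij_witness[where i = "\<lambda>(u, s, t). (u, t, s)" and j = "\<lambda>(u, s, t). (u, t, s)"])
     (auto simp: compositions3_def)

lemma sum_nested_eq_sum_compositions3:
  "(\<Sum>v'\<le>w. \<Sum>v\<le>v'. G (w - v') (v' - v) v) = (\<Sum>(u, s, t)\<in>compositions3 w. (G u s t :: 'a::comm_monoid_add))"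
proof -
  have "(\<Sum>v'\<le>w. \<Sum>v\<le>v'. G (w - v') (v' - v) v) = (\<Sum>(v', v)\<in>Sigma {..w} (\<lambda>v'. {..v'}). G (w - v') (v' - v) v)"
    by (rule sum.Sigma) auto
  also have "\<dots> = (\<Sum>(u, s, t)\<in>compositions3 w. G u s t)"
    by (rule sum.reindex_bij_witness[where i = "\<lambda>(u, s, t). (s + t, t)" and j = "\<lambda>(v', v). (w - v', v' - v, v)"])
       (auto simp: compositions3_def)
  finally show ?thesis .
qed

lemma sum_nested_eq_sum_compositions3_split1:
  "(\<Sum>v1\<le>w. \<Sum>v2\<le>w - v1. \<Sum>i\<le>w - v1 - v2. H (v1 + i) (w - v1 - v2 - i) v2 i)
   = (\<Sum>(u, s, t)\<in>compositions3 w. \<Sum>i\<le>u. (H u s t i :: 'a::comm_monoid_add))"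
proof -
  have "(\<Sum>v1\<le>w. \<Sum>v2\<le>w - v1. \<Sum>i\<le>w - v1 - v2. H (v1 + i) (w - v1 - v2 - i) v2 i)
     = (\<Sum>v1\<le>w. \<Sum>(v2, i)\<in>Sigma {..w - v1} (\<lambda>v2. {..w - v1 - v2}). H (v1 + i) (w - v1 - v2 - i) v2 i)"
    by (intro sum.cong refl sum.Sigma) auto
  also have "\<dots> = (\<Sum>(v1, v2, i)\<in>Sigma {..w} (\<lambda>v1. Sigma {..w - v1} (\<lambda>v2. {..w - v1 - v2})).
      H (v1 + i) (w - v1 - v2 - i) v2 i)"
    by (subst sum.Sigma) (auto simp: split_def)
  also have "\<dots> = (\<Sum>((u, s, t), i)\<in>Sigma (compositions3 w) (\<lambda>(u, s, t). {..u}). H u s t i)"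
    by (rule sum.reindex_bij_witness[where i = "\<lambda>((u, s, t), i). (u - i, t, i)"
          and j = "\<lambda>(v1, v2, i). ((v1 + i, w - v1 - v2 - i, v2), i)"])
       (auto simp: compositions3_def)
  also have "\<dots> = (\<Sum>(u, s, t)\<in>compositions3 w. \<Sum>i\<le>u. H u s t i)"
  proof -
    have "(\<Sum>x\<in>compositions3 w. \<Sum>i\<in>{..fst x}. H (fst x) (fst (snd x)) (snd (snd x)) i)
       = (\<Sum>(x, i)\<in>Sigma (compositions3 w) (\<lambda>x. {..fst x}). H (fst x) (fst (snd x)) (snd (snd x)) i)"
      by (rule sum.Sigma) (auto simp: finite_compositions3)
    then show ?thesis by (simp add: split_def)
  qed
  finally show ?thesis .
qed

lemma sum_nested_eq_sum_compositions3_split2: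
  "(\<Sum>v'\<le>w. \<Sum>v\<le>v'. \<Sum>i\<le>w - v'. \<Sum>j\<le>w - v' - i. H (v + i) (v' - v + j) (w - v' - i - j) i j)
   = (\<Sum>(u, s, t)\<in>compositions3 w. \<Sum>s1\<le>u. \<Sum>s2\<le>s. (H u s t s1 s2 :: 'a::comm_monoid_add))"
proof -
  have "(\<Sum>v'\<le>w. \<Sum>v\<le>v'. \<Sum>i\<le>w - v'. \<Sum>j\<le>w - v' - i. H (v + i) (v' - v + j) (w - v' - i - j) i j)
     = (\<Sum>v'\<le>w. \<Sum>v\<le>v'. \<Sum>(i, j)\<in>Sigma {..w - v'} (\<lambda>i. {..w - v' - i}). H (v + i) (v' - v + j) (w - v' - i - j) i j)"
    by (intro sum.cong refl sum.Sigma) auto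
  also have "\<dots> = (\<Sum>v'\<le>w. \<Sum>(v, i, j)\<in>Sigma {..v'} (\<lambda>v. Sigma {..w - v'} (\<lambda>i. {..w - v' - i})).
      H (v + i) (v' - v + j) (w - v' - i - j) i j)"
    by (intro sum.cong refl, subst sum.Sigma) (auto simp: split_def)
  also have "\<dots> = (\<Sum>(v', v, i, j)\<in>Sigma {..w} (\<lambda>v'. Sigma {..v'} (\<lambda>v. Sigma {..w - v'} (\<lambda>i. {..w - v' - i}))).
      H (v + i) (v' - v + j) (w - v' - i - j) i j)"
    by (subst sum.Sigma) (auto simp: split_def)
  also have "\<dots> = (\<Sum>((u, s, t), s1, s2)\<in>Sigma (compositions3 w) (\<lambda>(u, s, t). Sigma {..u} (\<lambda>_. {..s})). H u s t s1 s2)"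
    by (rule sum.reindex_bij_witness[where i = "\<lambda>((u, s, t), s1, s2). ((u - s1) + (s - s2), u - s1, s1, s2)"
          and j = "\<lambda>(v', v, i, j). ((v + i, v' - v + j, w - v' - i - j), i, j)"])
       (auto simp: compositions3_def)
  also have "\<dots> = (\<Sum>(u, s, t)\<in>compositions3 w. \<Sum>(s1, s2)\<in>Sigma {..u} (\<lambda>_. {..s}). H u s t s1 s2)"
  proof -
    have "(\<Sum>x\<in>compositions3 w. \<Sum>y\<in>Sigma {..fst x} (\<lambda>_. {..fst (snd x)}).
          H (fst x) (fst (snd x)) (snd (snd x)) (fst y) (snd y))
       = (\<Sum>(x, y)\<in>Sigma (compositions3 w) (\<lambda>x. Sigma {..fst x} (\<lambda>_. {..fst (snd x)})).
          H (fst x) (fst (snd x)) (snd (snd x)) (fst y) (snd y))"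
      by (rule sum.Sigma) (auto simp: finite_compositions3)
    then show ?thesis by (simp add: split_def)
  qed
  also have "\<dots> = (\<Sum>(u, s, t)\<in>compositions3 w. \<Sum>s1\<le>u. \<Sum>s2\<le>s. H u s t s1 s2)"
    by (intro sum.cong refl) (auto simp: sum.Sigma split_def)
  finally show ?thesis .
qed

lemma gbinomial_mult_shifted:
  fixes a :: "'a::field_char_0"
  shows "(a gchoose v) * ((a - of_nat v) gchoose i) = (a gchoose (v + i)) * of_nat ((v + i) choose i)"
proof -
  have "(v + i) choose v = (v + i) choose i"
    using binomial_symmetric[of v "v + i"] by simp
  then have "(of_nat (v + i) gchoose v :: 'a) = of_nat ((v + i) choose i)"
    by (metis binomial_gbinomial)
  then show ?thesis
    using gbinomial_trinomial_revision[of v "v + i" a] by simp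
qed

lemma gbinomial_shifted_Vandermonde:
  fixes a1 a2 :: "'a::field_char_0"
  shows "((a1 + a2 - of_nat v) gchoose j) * (a1 gchoose v)
    = (\<Sum>i\<le>j. (a1 gchoose (v + i)) * of_nat ((v + i) choose i) * (a2 gchoose (j - i)))"
proof -
  have "((a1 + a2 - of_nat v) gchoose j) = (\<Sum>i\<le>j. ((a1 - of_nat v) gchoose i) * (a2 gchoose (j - i)))"
    using gbinomial_Vandermonde[of "a1 - of_nat v" a2 j] by (simp add: atLeast0AtMost algebra_simps)
  then have "((a1 + a2 - of_nat v) gchoose j) * (a1 gchoose v)
      = (\<Sum>i\<le>j. (a1 gchoose v) * ((a1 - of_nat v) gchoose i) * (a2 gchoose (j - i)))"
    by (simp add: sum_distrib_left sum_distrib_right mult_ac)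
  then show ?thesis
    by (simp only: gbinomial_mult_shifted)
qed

lemma gbinomial_shifted_Vandermonde3:
  fixes a1 a2 a3 :: "'a::field_char_0"
  shows "((a1 + a2 + a3 - of_nat (v + q)) gchoose r) * (a1 gchoose v) * (a2 gchoose q)
    = (\<Sum>i\<le>r. \<Sum>j\<le>r - i. (a1 gchoose (v + i)) * (a2 gchoose (q + j)) * (a3 gchoose (r - i - j))
        * of_nat (((v + i) choose i) * ((q + j) choose j)))"
proof -
  have "a1 + a2 + a3 - of_nat (v + q) = a1 + (a2 + a3 - of_nat q) - of_nat v" by simp
  then have "((a1 + a2 + a3 - of_nat (v + q)) gchoose r) * (a1 gchoose v) * (a2 gchoose q)
     = (\<Sum>i\<le>r. (a1 gchoose (v + i)) * of_nat ((v + i) choose i)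
          * (((a2 + a3 - of_nat q) gchoose (r - i)) * (a2 gchoose q)))"
    by (simp only: gbinomial_shifted_Vandermonde sum_distrib_right mult.assoc)
  also have "\<dots> = (\<Sum>i\<le>r. \<Sum>j\<le>r - i. (a1 gchoose (v + i)) * (a2 gchoose (q + j)) * (a3 gchoose (r - i - j))
        * of_nat (((v + i) choose i) * ((q + j) choose j)))"
    by (simp only: gbinomial_shifted_Vandermonde sum_distrib_left) (simp add: mult_ac diff_diff_add)
  finally show ?thesis .
qed

lemma sum_atMost_first_two:
  fixes F :: "nat \<Rightarrow> 'a::comm_monoid_add"
  assumes "\<And>v. 2 \<le> v \<Longrightarrow> F v = 0"
  shows "(\<Sum>v\<le>w. F v) = F 0 + (if w = 0 then 0 else F 1)"
proof (cases w)
  case (Suc m)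
  have "(\<Sum>v\<le>w. F v) = (\<Sum>v\<in>{0, 1}. F v)"
    by (rule sum.mono_neutral_right) (use Suc assms in auto)
  then show ?thesis using Suc by simp
qed simp

lemma (in vector_space) sum_compositions3_binomial_top:
  assumes "n + m + l \<le> w"
  shows "(\<Sum>(u, s, t)\<in>compositions3 w. (of_nat (n choose u) * of_nat (m choose s) * of_nat (l choose t)) *s F u s t)
     = (if w = n + m + l then F n m l else 0)"
proof -
  have le: "u \<le> p" if "of_nat (p choose u) \<noteq> (0 :: 'a)" for p u
    using that by (metis binomial_eq_0 not_le of_nat_0)
  have "(\<Sum>(u, s, t)\<in>compositions3 w. (of_nat (n choose u) * of_nat (m choose s) * of_nat (l choose t)) *s F u s t)
     = (\<Sum>(u, s, t)\<in>compositions3 w \<inter> {(n, m, l)}.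
          (of_nat (n choose u) * of_nat (m choose s) * of_nat (l choose t)) *s F u s t)"
    by (rule sum.mono_neutral_right[OF finite_compositions3])
       (use assms in \<open>auto simp: compositions3_def dest!: le\<close>)
  also have "\<dots> = (if w = n + m + l then F n m l else 0)"
    by (auto simp: compositions3_def)
  finally show ?thesis .
qed

section \<open>The coefficient algebra of a conformal algebra\<close>

locale conformal =
  fixes sc :: "'k::field_char_0 \<Rightarrow> 'c::ab_group_add \<Rightarrow> 'c"
    and D :: "'c \<Rightarrow> 'c"
    and pr :: "nat \<Rightarrow> 'c \<Rightarrow> 'c \<Rightarrow> 'c"
  assumes conformal_algebra: "conformal_algebra sc D pr"
begin

sublocale vector_space sc
  using conformal_algebra unfolding conformal_algebra_def by blast

sublocale D: module_hom sc sc D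
  using conformal_algebra unfolding conformal_algebra_def linear_iff_module_hom by blast

sublocale pr_right: module_hom sc sc "pr n a" for n a
  using conformal_algebra unfolding conformal_algebra_def linear_iff_module_hom by blast

sublocale pr_left: module_hom sc sc "\<lambda>a. pr n a b" for n b
  using conformal_algebra unfolding conformal_algebra_def linear_iff_module_hom by blast

lemma locality: "\<exists>N. \<forall>n\<ge>N. pr n a b = 0"
  using conformal_algebra unfolding conformal_algebra_def by blast

lemma pr_D_left: "pr n (D a) b = - sc (of_nat n) (pr (n - 1) a b)"
  using conformal_algebra unfolding conformal_algebra_def by blast

lemma pr_D_right: "pr n a (D b) = D (pr n a b) + sc (of_nat n) (pr (n - 1) a b)"
  using conformal_algebra unfolding conformal_algebra_def by blast

abbreviation coeff_times :: "(int \<Rightarrow> 'c) \<Rightarrow> (int \<Rightarrow> 'c) \<Rightarrow> int \<Rightarrow> 'c" (infixl \<open>\<star>\<close> 70) where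
  "f \<star> g \<equiv> coeff_mul sc pr f g"

definition coeff_mul_term :: "(int \<Rightarrow> 'c) \<Rightarrow> (int \<Rightarrow> 'c) \<Rightarrow> int \<Rightarrow> int \<Rightarrow> int \<Rightarrow> 'c" where
  "coeff_mul_term f g j k r =
    (if j \<le> k + r then sc (of_int k gchoose nat (k + r - j)) (pr (nat (k + r - j)) (f k) (g r)) else 0)"

lemma coeff_mul_term_nonzero:
  assumes "coeff_mul_term f g j k r \<noteq> 0"
  shows "f k \<noteq> 0" "g r \<noteq> 0" "j \<le> k + r"
  using assms by (auto simp: coeff_mul_term_def split: if_splits)

lemma coeff_mul_expand:
  assumes "fin_supp f" "fin_supp g" "finite A" "finite B"
    and "\<And>k r. f k \<noteq> 0 \<Longrightarrow> g r \<noteq> 0 \<Longrightarrow> j \<le> k + r \<Longrightarrow> k \<in> A \<and> r \<in> B"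
  shows "(f \<star> g) j = (\<Sum>k\<in>A. \<Sum>r\<in>B. coeff_mul_term f g j k r)"
proof -
  let ?Sf = "{k. f k \<noteq> 0}" and ?Sg = "{r. g r \<noteq> 0}"
  have fin: "finite ?Sf" "finite ?Sg" using assms(1,2) unfolding fin_supp_def by auto
  have vanish: "coeff_mul_term f g j k r = 0" if "\<not> (k \<in> A \<inter> ?Sf \<and> r \<in> B \<inter> ?Sg)" for k r
    using that coeff_mul_term_nonzero[of f g j k r] assms(5)[of k r] by blast
  have "(f \<star> g) j = (\<Sum>(k, r)\<in>?Sf \<times> ?Sg. coeff_mul_term f g j k r)"
    unfolding coeff_mul_def coeff_mul_term_def sum.cartesian_product by simp
  also have "\<dots> = (\<Sum>(k, r)\<in>A \<times> B. coeff_mul_term f g j k r)"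
    by (rule sum.same_carrierI[where C = "(A \<union> ?Sf) \<times> (B \<union> ?Sg)"]) (use fin assms(3,4) vanish in auto)
  also have "\<dots> = (\<Sum>k\<in>A. \<Sum>r\<in>B. coeff_mul_term f g j k r)"
    by (simp add: sum.cartesian_product)
  finally show ?thesis .
qed

lemma coeff_mul_series_from_above:
  assumes "fin_supp (series_from T1 x)" "fin_supp (series_from T2 y)" "T1 + T2 < j"
  shows "(series_from T1 x \<star> series_from T2 y) j = 0"
proof -
  have "(series_from T1 x \<star> series_from T2 y) j
      = (\<Sum>k\<in>{}. \<Sum>r\<in>{}. coeff_mul_term (series_from T1 x) (series_from T2 y) j k r)"
    by (rule coeff_mul_expand) (use assms in \<open>auto simp: series_from_def split: if_splits\<close>)
  then show ?thesis by simp
qed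

lemma coeff_mul_series_from_below:
  assumes "fin_supp (series_from T1 x)" "fin_supp (series_from T2 y)"
  shows "(series_from T1 x \<star> series_from T2 y) (T1 + T2 - int w)
    = (\<Sum>v1\<le>w. \<Sum>v2\<le>w - v1. sc (of_int (T1 - int v1) gchoose (w - v1 - v2)) (pr (w - v1 - v2) (x v1) (y v2)))"
proof -
  let ?j = "T1 + T2 - int w" and ?term = "coeff_mul_term (series_from T1 x) (series_from T2 y) (T1 + T2 - int w)"
  have "(series_from T1 x \<star> series_from T2 y) ?j
      = (\<Sum>k\<in>(\<lambda>v. T1 - int v) ` {..w}. \<Sum>r\<in>(\<lambda>v. T2 - int v) ` {..w}. ?term k r)"
  proof (rule coeff_mul_expand)
    fix k r assume kr: "series_from T1 x k \<noteq> 0" "series_from T2 y r \<noteq> 0" "?j \<le> k + r"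
    then have "k \<le> T1" "r \<le> T2" unfolding series_from_def by (auto split: if_splits)
    then show "k \<in> (\<lambda>v. T1 - int v) ` {..w} \<and> r \<in> (\<lambda>v. T2 - int v) ` {..w}"
      using kr(3) by (auto intro!: image_eqI[of k _ "nat (T1 - k)"] image_eqI[of r _ "nat (T2 - r)"])
  qed (use assms in auto)
  also have "\<dots> = (\<Sum>v1\<le>w. \<Sum>v2\<le>w. ?term (T1 - int v1) (T2 - int v2))"
    by (simp add: sum.reindex inj_on_def)
  also have "\<dots> = (\<Sum>v1\<le>w. \<Sum>v2\<le>w - v1. ?term (T1 - int v1) (T2 - int v2))"
    by (intro sum.cong refl sum.mono_neutral_right) (auto simp: coeff_mul_term_def)
  also have "\<dots> = (\<Sum>v1\<le>w. \<Sum>v2\<le>w - v1.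
      sc (of_int (T1 - int v1) gchoose (w - v1 - v2)) (pr (w - v1 - v2) (x v1) (y v2)))"
  proof (intro sum.cong refl)
    fix v1 v2 assume "v1 \<in> {..w}" "v2 \<in> {..w - v1}"
    then have "nat (T1 - int v1 + (T2 - int v2) - ?j) = w - v1 - v2" "?j \<le> T1 - int v1 + (T2 - int v2)"
      by auto
    then show "?term (T1 - int v1) (T2 - int v2)
        = sc (of_int (T1 - int v1) gchoose (w - v1 - v2)) (pr (w - v1 - v2) (x v1) (y v2))"
      by (simp add: coeff_mul_term_def series_from_def)
  qed
  finally show ?thesis .
qed

lemma coeff_mul_series_from:
  assumes "fin_supp (series_from T1 x)" "fin_supp (series_from T2 y)"
  shows "series_from T1 x \<star> series_from T2 y = series_from (T1 + T2)
     (\<lambda>w. \<Sum>v1\<le>w. \<Sum>v2\<le>w - v1. sc (of_int (T1 - int v1) gchoose (w - v1 - v2)) (pr (w - v1 - v2) (x v1) (y v2)))"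
proof
  fix j
  show "(series_from T1 x \<star> series_from T2 y) j = series_from (T1 + T2)
     (\<lambda>w. \<Sum>v1\<le>w. \<Sum>v2\<le>w - v1. sc (of_int (T1 - int v1) gchoose (w - v1 - v2)) (pr (w - v1 - v2) (x v1) (y v2))) j"
  proof (cases "j \<le> T1 + T2")
    case True
    then have "j = T1 + T2 - int (nat (T1 + T2 - j))" by simp
    then show ?thesis
      using coeff_mul_series_from_below[OF assms, of "nat (T1 + T2 - j)"] True
      by (simp add: series_from_def)
  next
    case False
    then show ?thesis
      using coeff_mul_series_from_above[OF assms, of j] by (simp add: series_from_def)
  qed
qed

lemma fin_supp_coeff_mul:
  assumes f: "fin_supp f" and g: "fin_supp g"
  shows "fin_supp (f \<star> g)"
proof -
  obtain N where N: "\<And>a b n. N a b \<le> n \<Longrightarrow> pr n a b = 0"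
    using locality by metis
  let ?Sf = "{k. f k \<noteq> 0}" and ?Sg = "{r. g r \<noteq> 0}"
  let ?bound = "\<Union>(k, r)\<in>?Sf \<times> ?Sg. {k + r - int (N (f k) (g r)) .. k + r}"
  have "{j. (f \<star> g) j \<noteq> 0} \<subseteq> ?bound"
  proof
    fix j assume "j \<in> {j. (f \<star> g) j \<noteq> 0}"
    then have "(\<Sum>k\<in>?Sf. \<Sum>r\<in>?Sg. coeff_mul_term f g j k r) \<noteq> 0"
      by (simp add: coeff_mul_def coeff_mul_term_def)
    then obtain k r where kr: "k \<in> ?Sf" "r \<in> ?Sg" "coeff_mul_term f g j k r \<noteq> 0"
      by (meson sum.not_neutral_contains_not_neutral)
    then have "j \<le> k + r" "pr (nat (k + r - j)) (f k) (g r) \<noteq> 0"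
      by (auto simp: coeff_mul_term_def split: if_splits)
    then show "j \<in> ?bound"
      using kr(1,2) N[of "f k" "g r" "nat (k + r - j)"] by force
  qed
  moreover have "finite ?Sf" "finite ?Sg"
    using f g unfolding fin_supp_def by auto
  ultimately show ?thesis
    unfolding fin_supp_def by (auto intro: finite_subset)
qed

lemma coeff_mul_lmonom_series_from:
  assumes "fin_supp (series_from T y)"
  shows "lmonom a n \<star> series_from T y
    = series_from (n + T) (\<lambda>w. \<Sum>v\<le>w. sc (of_int n gchoose (w - v)) (pr (w - v) a (y v)))"
proof -
  have sum_if: "(\<Sum>v\<in>B. if P then F v else 0) = (if P then sum F B else 0)" for P B and F :: "nat \<Rightarrow> 'c"
    by simp
  show ?thesis
    unfolding lmonom_eq_series_from
    by (subst coeff_mul_series_from)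
       (auto intro!: fin_supp_series_from assms
         simp: if_distrib[of "\<lambda>x. pr _ x _"] if_distrib[of "sc _"] sum_if cong: if_cong)
qed

lemma coeff_mul_series_from_lmonom:
  assumes "fin_supp (series_from T x)"
  shows "series_from T x \<star> lmonom b n
    = series_from (T + n) (\<lambda>w. \<Sum>v\<le>w. sc (of_int (T - int v) gchoose (w - v)) (pr (w - v) (x v) b))"
  unfolding lmonom_eq_series_from
  by (subst coeff_mul_series_from)
     (auto intro!: fin_supp_series_from assms simp: if_distrib[of "pr _ _"] if_distrib[of "sc _"] cong: if_cong)

lemma coeff_mul_lmonom:
  "lmonom a k \<star> lmonom b r = series_from (k + r) (\<lambda>w. sc (of_int k gchoose w) (pr w a b))"
  by (subst (2) lmonom_eq_series_from, subst coeff_mul_lmonom_series_from)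
     (auto intro!: fin_supp_series_from simp: if_distrib[of "pr _ _"] if_distrib[of "sc _"] cong: if_cong)

lemma coeff_mul_zero_left [simp]: "0 \<star> h = 0"
  and coeff_mul_zero_right [simp]: "h \<star> 0 = 0"
  by (simp_all add: coeff_mul_def zero_fun_def)

lemma coeff_mul_add_left:
  assumes "fin_supp f" "fin_supp g" "fin_supp h"
  shows "(f + g) \<star> h = f \<star> h + g \<star> h"
proof
  fix j
  let ?A = "{k. f k \<noteq> 0} \<union> {k. g k \<noteq> 0}" and ?B = "{r. h r \<noteq> 0}"
  have "finite ?A" "finite ?B" using assms unfolding fin_supp_def by auto
  then have "((f + g) \<star> h) j = (\<Sum>k\<in>?A. \<Sum>r\<in>?B. coeff_mul_term (f + g) h j k r)"
    and "(f \<star> h) j = (\<Sum>k\<in>?A. \<Sum>r\<in>?B. coeff_mul_term f h j k r)"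
    and "(g \<star> h) j = (\<Sum>k\<in>?A. \<Sum>r\<in>?B. coeff_mul_term g h j k r)"
    by (auto intro!: coeff_mul_expand fin_supp_add assms)
  moreover have "coeff_mul_term (f + g) h j k r = coeff_mul_term f h j k r + coeff_mul_term g h j k r" for k r
    by (simp add: coeff_mul_term_def pr_left.add scale_right_distrib)
  ultimately show "((f + g) \<star> h) j = (f \<star> h + g \<star> h) j"
    by (simp add: sum.distrib)
qed

lemma coeff_mul_add_right:
  assumes "fin_supp f" "fin_supp g" "fin_supp h"
  shows "h \<star> (f + g) = h \<star> f + h \<star> g"
proof
  fix j
  let ?A = "{k. h k \<noteq> 0}" and ?B = "{r. f r \<noteq> 0} \<union> {r. g r \<noteq> 0}"
  have "finite ?A" "finite ?B" using assms unfolding fin_supp_def by auto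
  then have "(h \<star> (f + g)) j = (\<Sum>k\<in>?A. \<Sum>r\<in>?B. coeff_mul_term h (f + g) j k r)"
    and "(h \<star> f) j = (\<Sum>k\<in>?A. \<Sum>r\<in>?B. coeff_mul_term h f j k r)"
    and "(h \<star> g) j = (\<Sum>k\<in>?A. \<Sum>r\<in>?B. coeff_mul_term h g j k r)"
    by (auto intro!: coeff_mul_expand fin_supp_add assms)
  moreover have "coeff_mul_term h (f + g) j k r = coeff_mul_term h f j k r + coeff_mul_term h g j k r" for k r
    by (simp add: coeff_mul_term_def pr_right.add scale_right_distrib)
  ultimately show "(h \<star> (f + g)) j = (h \<star> f + h \<star> g) j"
    by (simp add: sum.distrib)
qed

lemma coeff_mul_uminus_left: "fin_supp f \<Longrightarrow> fin_supp h \<Longrightarrow> (- f) \<star> h = - (f \<star> h)"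
  using coeff_mul_add_left[of "- f" f h] by (simp add: fin_supp_uminus eq_neg_iff_add_eq_0)

lemma coeff_mul_uminus_right: "fin_supp f \<Longrightarrow> fin_supp h \<Longrightarrow> h \<star> (- f) = - (h \<star> f)"
  using coeff_mul_add_right[of "- f" f h] by (simp add: fin_supp_uminus eq_neg_iff_add_eq_0)

lemma coeff_mul_diff_left:
  "fin_supp f \<Longrightarrow> fin_supp g \<Longrightarrow> fin_supp h \<Longrightarrow> (f - g) \<star> h = f \<star> h - g \<star> h"
  using coeff_mul_add_left[of f "- g" h] coeff_mul_uminus_left[of g h] by (simp add: fin_supp_uminus)

lemma coeff_mul_diff_right:
  "fin_supp f \<Longrightarrow> fin_supp g \<Longrightarrow> fin_supp h \<Longrightarrow> h \<star> (f - g) = h \<star> f - h \<star> g"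
  using coeff_mul_add_right[of f "- g" h] coeff_mul_uminus_right[of g h] by (simp add: fin_supp_uminus)

section \<open>The relations of the coefficient algebra\<close>

text \<open>\<open>total_deriv\<close> is \<open>D \<otimes> 1 + 1 \<otimes> d/dt\<close>; it sends \<open>a(k)\<close> to the generator \<open>(D a)(k) + k a(k - 1)\<close>
  of \<open>coeff_rel\<close>.\<close>

definition total_deriv :: "(int \<Rightarrow> 'c) \<Rightarrow> int \<Rightarrow> 'c" where
  "total_deriv f = (\<lambda>j. D (f j) + sc (of_int (j + 1)) (f (j + 1)))"

sublocale total_deriv: additive total_deriv
  by unfold_locales (simp add: total_deriv_def fun_eq_iff D.add scale_right_distrib)

definition seq_scale :: "'k \<Rightarrow> (int \<Rightarrow> 'c) \<Rightarrow> int \<Rightarrow> 'c" where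
  "seq_scale c f = (\<lambda>j. sc c (f j))"

lemma fin_supp_seq_scale: "fin_supp f \<Longrightarrow> fin_supp (seq_scale c f)"
  unfolding fin_supp_def seq_scale_def by (rule finite_subset[of _ "{k. f k \<noteq> 0}"]) auto

lemma total_deriv_seq_scale: "total_deriv (seq_scale c f) = seq_scale c (total_deriv f)"
  by (simp add: total_deriv_def seq_scale_def fun_eq_iff D.scale scale_right_distrib scale_left_commute)

lemma coeff_gen_eq_total_deriv: "coeff_gen sc D a k = total_deriv (lmonom a k)"
  by (auto simp: coeff_gen_def total_deriv_def lmonom_def fun_eq_iff)

lemma fin_supp_total_deriv:
  assumes "fin_supp f"
  shows "fin_supp (total_deriv f)"
proof -
  have "{j. total_deriv f j \<noteq> 0} \<subseteq> {k. f k \<noteq> 0} \<union> (\<lambda>k. k - 1) ` {k. f k \<noteq> 0}"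
    by (auto simp: total_deriv_def intro!: image_eqI[where x = "_ + 1"])
  then show ?thesis using assms unfolding fin_supp_def using finite_subset by blast
qed

lemma total_deriv_series_from:
  "total_deriv (series_from T q)
    = series_from T (\<lambda>w. D (q w) + (if w = 0 then 0 else sc (of_int (T - int w + 1)) (q (w - 1))))"
proof
  fix j
  show "total_deriv (series_from T q) j
    = series_from T (\<lambda>w. D (q w) + (if w = 0 then 0 else sc (of_int (T - int w + 1)) (q (w - 1)))) j"
  proof (cases "j < T")
    case True
    then have "nat (T - j) = Suc (nat (T - (j + 1)))" "T - int (nat (T - j)) + 1 = j + 1" by auto
    then show ?thesis using True by (simp add: total_deriv_def series_from_def)
  next
    case False
    then show ?thesis by (cases "j = T") (auto simp: total_deriv_def series_from_def)
  qed
qed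

lemma total_deriv_lmonom:
  "total_deriv (lmonom a k) = series_from k (\<lambda>w. if w = 0 then D a else if w = 1 then sc (of_int k) a else 0)"
  unfolding lmonom_eq_series_from total_deriv_series_from by (rule arg_cong[where f = "series_from k"]) auto

lemma coeff_mul_total_deriv_lmonom: "total_deriv (lmonom a k) \<star> lmonom b r = 0"
proof -
  let ?q = "\<lambda>w. if w = 0 then D a else if w = 1 then sc (of_int k) a else 0"
  have "fin_supp (series_from k ?q)"
    by (rule fin_supp_series_from) (rule finite_subset[of _ "{0, 1}"], auto)
  then have "total_deriv (lmonom a k) \<star> lmonom b r
      = series_from (k + r) (\<lambda>w. \<Sum>v\<le>w. sc (of_int (k - int v) gchoose (w - v)) (pr (w - v) (?q v) b))"
    unfolding total_deriv_lmonom by (rule coeff_mul_series_from_lmonom)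
  also have "\<dots> = series_from (k + r) (\<lambda>w. 0)"
  proof (rule arg_cong[where f = "series_from (k + r)"], rule ext)
    fix w
    have "(\<Sum>v\<le>w. sc (of_int (k - int v) gchoose (w - v)) (pr (w - v) (?q v) b))
      = sc (of_int k gchoose w) (pr w (D a) b)
        + (if w = 0 then 0 else sc (of_int (k - 1) gchoose (w - 1)) (pr (w - 1) (sc (of_int k) a) b))"
      by (subst sum_atMost_first_two) auto
    also have "\<dots> = 0"
    proof (cases w)
      case (Suc m)
      \<comment> \<open>\<open>pr_D_left\<close> cancels against \<open>(m + 1) (k choose (m + 1)) = k ((k - 1) choose m)\<close>\<close>
      have "of_nat (Suc m) * (of_int k gchoose Suc m) = (of_int k :: 'k) * ((of_int k - 1) gchoose m)"
        by (rule gbinomial_absorption)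
      then show ?thesis
        using Suc by (simp add: pr_D_left pr_left.scale mult.commute)
    qed (simp add: pr_D_left)
    finally show "(\<Sum>v\<le>w. sc (of_int (k - int v) gchoose (w - v)) (pr (w - v) (?q v) b)) = 0" .
  qed
  finally show ?thesis by simp
qed

lemma total_deriv_coeff_mul_lmonom:
  "total_deriv (lmonom a k \<star> lmonom b r) = lmonom a k \<star> total_deriv (lmonom b r)"
proof -
  let ?q = "\<lambda>w. if w = 0 then D b else if w = 1 then sc (of_int r) b else 0"
  have "fin_supp (series_from r ?q)"
    by (rule fin_supp_series_from) (rule finite_subset[of _ "{0, 1}"], auto)
  then have rhs: "lmonom a k \<star> total_deriv (lmonom b r)
      = series_from (k + r) (\<lambda>w. \<Sum>v\<le>w. sc (of_int k gchoose (w - v)) (pr (w - v) a (?q v)))"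
    unfolding total_deriv_lmonom by (rule coeff_mul_lmonom_series_from)
  show ?thesis
    unfolding rhs coeff_mul_lmonom total_deriv_series_from
  proof (rule arg_cong[where f = "series_from (k + r)"], rule ext)
    fix w
    have "(\<Sum>v\<le>w. sc (of_int k gchoose (w - v)) (pr (w - v) a (?q v)))
      = sc (of_int k gchoose w) (pr w a (D b))
        + (if w = 0 then 0 else sc (of_int k gchoose (w - 1)) (pr (w - 1) a (sc (of_int r) b)))"
      by (subst sum_atMost_first_two) auto
    also have "\<dots> = D (sc (of_int k gchoose w) (pr w a b))
        + (if w = 0 then 0 else sc (of_int (k + r - int w + 1)) (sc (of_int k gchoose (w - 1)) (pr (w - 1) a b)))"
    proof (cases w)
      case (Suc m)
      have "(of_int k :: 'k) * (of_int k gchoose m)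
          = of_nat m * (of_int k gchoose m) + of_nat (Suc m) * (of_int k gchoose Suc m)"
        by (rule gbinomial_mult_1)
      then have "(of_int (k + r - int w + 1) :: 'k) * (of_int k gchoose m)
          = of_nat (Suc m) * (of_int k gchoose Suc m) + (of_int k gchoose m) * of_int r"
        using Suc by (simp add: algebra_simps)
      then show ?thesis
        using Suc by (simp add: pr_D_right pr_right.scale D.add D.scale scale_right_distrib
            scale_left_distrib[symmetric] mult.commute add.assoc)
    qed (simp add: pr_D_right D.scale)
    finally show "D (sc (of_int k gchoose w) (pr w a b))
        + (if w = 0 then 0 else sc (of_int (k + r - int w + 1)) (sc (of_int k gchoose (w - 1)) (pr (w - 1) a b)))
      = (\<Sum>v\<le>w. sc (of_int k gchoose (w - v)) (pr (w - v) a (?q v)))" by (rule sym)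
  qed
qed

lemma coeff_mul_total_deriv_left:
  assumes "fin_supp g" "fin_supp h"
  shows "total_deriv g \<star> h = 0"
  using assms(1)
proof (induct g rule: fin_supp_induct)
  case (lmonom a k)
  from assms(2) show ?case
  proof (induct h rule: fin_supp_induct)
    case (add f g)
    then show ?case
      by (simp only: coeff_mul_add_right[OF _ _ fin_supp_total_deriv[OF fin_supp_lmonom]] add_0)
  qed (simp_all only: coeff_mul_total_deriv_lmonom coeff_mul_zero_right)
next
  case (add f g)
  then show ?case
    by (simp only: total_deriv.add add_0
        coeff_mul_add_left[OF fin_supp_total_deriv fin_supp_total_deriv assms(2)])
qed (simp only: total_deriv.zero coeff_mul_zero_left)

lemma total_deriv_coeff_mul:
  assumes "fin_supp g" "fin_supp h"
  shows "total_deriv (g \<star> h) = g \<star> total_deriv h"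
  using assms(1)
proof (induct g rule: fin_supp_induct)
  case (lmonom a k)
  from assms(2) show ?case
  proof (induct h rule: fin_supp_induct)
    case (add f g)
    then show ?case
      by (simp only: coeff_mul_add_right[OF _ _ fin_supp_lmonom] fin_supp_total_deriv total_deriv.add)
  qed (simp_all only: total_deriv.zero total_deriv_coeff_mul_lmonom coeff_mul_zero_right)
next
  case (add f g)
  then show ?case
    by (simp only: total_deriv.add coeff_mul_add_left[OF _ _ assms(2)]
        coeff_mul_add_left[OF _ _ fin_supp_total_deriv[OF assms(2)]] fin_supp_coeff_mul assms(2))
qed (simp only: total_deriv.zero coeff_mul_zero_left)

abbreviation rel :: "(int \<Rightarrow> 'c) set" where
  "rel \<equiv> coeff_rel sc D"

lemma zero_in_rel [simp]: "0 \<in> rel"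
  unfolding zero_fun_def by (rule coeff_rel.zero)

lemma rel_add:
  assumes "f \<in> rel" "g \<in> rel"
  shows "f + g \<in> rel"
  using assms(2)
proof (induct g rule: coeff_rel.induct)
  case zero
  then show ?case using assms(1) by (simp add: zero_fun_def[symmetric])
next
  case (step g a k)
  then have "(\<lambda>j. (f + g) j + coeff_gen sc D a k j) \<in> rel"
    by (intro coeff_rel.step) simp
  then show ?case by (simp add: plus_fun_def add.assoc)
qed

lemma total_deriv_in_rel: "fin_supp h \<Longrightarrow> total_deriv h \<in> rel"
proof (induct h rule: fin_supp_induct)
  case (lmonom a k)
  show ?case
    using coeff_rel.step[OF coeff_rel.zero, where sc = sc and D = D and a = a and k = k]
    by (simp add: coeff_gen_eq_total_deriv)
qed (simp_all only: total_deriv.zero total_deriv.add rel_add zero_in_rel)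

lemma rel_eq_total_deriv: "r \<in> rel \<Longrightarrow> \<exists>h. fin_supp h \<and> r = total_deriv h"
proof (induct r rule: coeff_rel.induct)
  case zero
  have "(\<lambda>_. 0) = total_deriv 0"
    by (simp add: total_deriv.zero zero_fun_def[symmetric])
  then show ?case using fin_supp_zero by blast
next
  case (step f a k)
  then obtain h where h: "fin_supp h" "f = total_deriv h" by blast
  then have "(\<lambda>j. f j + coeff_gen sc D a k j) = total_deriv (h + lmonom a k)"
    by (simp add: total_deriv.add coeff_gen_eq_total_deriv fun_eq_iff)
  then show ?case using h(1) fin_supp_add fin_supp_lmonom by blast
qed

lemma rel_iff: "r \<in> rel \<longleftrightarrow> (\<exists>h. fin_supp h \<and> r = total_deriv h)"
  using rel_eq_total_deriv total_deriv_in_rel by blast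

lemma rel_uminus: "f \<in> rel \<Longrightarrow> - f \<in> rel"
  unfolding rel_iff by (metis fin_supp_uminus total_deriv.minus)

lemma rel_diff: "f \<in> rel \<Longrightarrow> g \<in> rel \<Longrightarrow> f - g \<in> rel"
  using rel_add[of f "- g"] rel_uminus[of g] by simp

lemma rel_seq_scale: "f \<in> rel \<Longrightarrow> seq_scale c f \<in> rel"
  unfolding rel_iff by (metis fin_supp_seq_scale total_deriv_seq_scale)

lemma coeff_mul_rel_left: "r \<in> rel \<Longrightarrow> fin_supp g \<Longrightarrow> r \<star> g = 0"
  unfolding rel_iff using coeff_mul_total_deriv_left by blast

lemma coeff_mul_rel_right: "r \<in> rel \<Longrightarrow> fin_supp g \<Longrightarrow> g \<star> r \<in> rel"
  unfolding rel_iff by (metis total_deriv_coeff_mul fin_supp_coeff_mul)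

text \<open>If \<open>r = total_deriv h\<close>, then \<open>r j = D (h j) + (j + 1) h (j + 1)\<close>, so the vanishing of \<open>r\<close> below
  \<open>-1\<close> propagates the vanishing of \<open>h\<close> upwards from below its support as far as \<open>h (-1)\<close>; in \<open>r (-1)\<close>
  the term \<open>h 0\<close> is killed by the factor \<open>0\<close>.\<close>

lemma rel_residue_eq_zero:
  assumes r: "r \<in> rel" and below: "\<And>j. j < -1 \<Longrightarrow> r j = 0"
  shows "r (-1) = 0"
proof -
  obtain h where h: "fin_supp h" "r = total_deriv h"
    using r rel_iff by blast
  define B where "B = min (-1) (Min (insert 0 {j. h j \<noteq> 0}) - 1)"
  have "B \<le> -1" unfolding B_def by simp
  have below_B: "h j = 0" if "j \<le> B" for j
  proof (rule ccontr)
    assume "h j \<noteq> 0"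
    moreover have "finite {j. h j \<noteq> 0}" using h(1) unfolding fin_supp_def .
    ultimately have "Min (insert 0 {j. h j \<noteq> 0}) \<le> j" by (intro Min_le) auto
    then show False using that unfolding B_def by linarith
  qed
  have "h j = 0" if "B \<le> j" "j \<le> -1" for j
    using that
  proof (induct j rule: int_ge_induct)
    case (step i)
    then have "r i = 0" "h i = 0" using below by auto
    moreover have "i + 1 \<noteq> 0" using step.prems by linarith
    then have "(of_int (i + 1) :: 'k) \<noteq> 0" by (metis of_int_eq_0_iff)
    ultimately show ?case
      unfolding h(2) total_deriv_def by simp
  qed (use below_B in simp)
  then show ?thesis
    using \<open>B \<le> -1\<close> unfolding h(2) total_deriv_def by simp
qed

section \<open>Linearizing the Jordan identity\<close>

definition jassoc :: "(int \<Rightarrow> 'c) \<Rightarrow> (int \<Rightarrow> 'c) \<Rightarrow> (int \<Rightarrow> 'c) \<Rightarrow> (int \<Rightarrow> 'c) \<Rightarrow> int \<Rightarrow> 'c" where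
  "jassoc p q r y = ((p \<star> q) \<star> y) \<star> r - (p \<star> q) \<star> (y \<star> r)"

definition jassoc_sym :: "(int \<Rightarrow> 'c) \<Rightarrow> (int \<Rightarrow> 'c) \<Rightarrow> (int \<Rightarrow> 'c) \<Rightarrow> (int \<Rightarrow> 'c) \<Rightarrow> int \<Rightarrow> 'c" where
  "jassoc_sym x1 x2 x3 y = jassoc x1 x2 x3 y + jassoc x2 x1 x3 y + jassoc x1 x3 x2 y
     + jassoc x3 x1 x2 y + jassoc x2 x3 x1 y + jassoc x3 x2 x1 y"

definition lin_jordan :: "(int \<Rightarrow> 'c) \<Rightarrow> (int \<Rightarrow> 'c) \<Rightarrow> (int \<Rightarrow> 'c) \<Rightarrow> (int \<Rightarrow> 'c) \<Rightarrow> int \<Rightarrow> 'c" where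
  "lin_jordan a b c d = a \<star> (b \<star> (c \<star> d)) + (b \<star> (a \<star> c)) \<star> d + c \<star> (b \<star> (a \<star> d))
     - (a \<star> b) \<star> (c \<star> d) - (a \<star> c) \<star> (b \<star> d) - (c \<star> b) \<star> (a \<star> d)"

lemma coeff_jordan_iff:
  "coeff_jordan sc D pr \<longleftrightarrow>
    coeff_commutative sc D pr \<and> (\<forall>x y. fin_supp x \<longrightarrow> fin_supp y \<longrightarrow> jassoc x x x y \<in> rel)"
  unfolding coeff_jordan_def jassoc_def fun_diff_def ..

lemma jassoc_add:
  "fin_supp p \<Longrightarrow> fin_supp p' \<Longrightarrow> fin_supp q \<Longrightarrow> fin_supp r \<Longrightarrow> fin_supp y \<Longrightarrow>
    jassoc (p + p') q r y = jassoc p q r y + jassoc p' q r y"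
  "fin_supp p \<Longrightarrow> fin_supp q \<Longrightarrow> fin_supp q' \<Longrightarrow> fin_supp r \<Longrightarrow> fin_supp y \<Longrightarrow>
    jassoc p (q + q') r y = jassoc p q r y + jassoc p q' r y"
  "fin_supp p \<Longrightarrow> fin_supp q \<Longrightarrow> fin_supp r \<Longrightarrow> fin_supp r' \<Longrightarrow> fin_supp y \<Longrightarrow>
    jassoc p q (r + r') y = jassoc p q r y + jassoc p q r' y"
  "fin_supp p \<Longrightarrow> fin_supp q \<Longrightarrow> fin_supp r \<Longrightarrow> fin_supp y \<Longrightarrow> fin_supp y' \<Longrightarrow>
    jassoc p q r (y + y') = jassoc p q r y + jassoc p q r y'"
  unfolding jassoc_def by (simp_all add: coeff_mul_add_left coeff_mul_add_right fin_supp_coeff_mul fin_supp_add)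

lemma jassoc_sym_add:
  "fin_supp p \<Longrightarrow> fin_supp p' \<Longrightarrow> fin_supp q \<Longrightarrow> fin_supp r \<Longrightarrow> fin_supp y \<Longrightarrow>
    jassoc_sym (p + p') q r y = jassoc_sym p q r y + jassoc_sym p' q r y"
  "fin_supp p \<Longrightarrow> fin_supp q \<Longrightarrow> fin_supp q' \<Longrightarrow> fin_supp r \<Longrightarrow> fin_supp y \<Longrightarrow>
    jassoc_sym p (q + q') r y = jassoc_sym p q r y + jassoc_sym p q' r y"
  "fin_supp p \<Longrightarrow> fin_supp q \<Longrightarrow> fin_supp r \<Longrightarrow> fin_supp r' \<Longrightarrow> fin_supp y \<Longrightarrow>
    jassoc_sym p q (r + r') y = jassoc_sym p q r y + jassoc_sym p q r' y"
  "fin_supp p \<Longrightarrow> fin_supp q \<Longrightarrow> fin_supp r \<Longrightarrow> fin_supp y \<Longrightarrow> fin_supp y' \<Longrightarrow>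
    jassoc_sym p q r (y + y') = jassoc_sym p q r y + jassoc_sym p q r y'"
  unfolding jassoc_sym_def by (simp_all add: jassoc_add algebra_simps)

lemma jassoc_sym_zero:
  "jassoc_sym 0 q r y = 0" "jassoc_sym p 0 r y = 0" "jassoc_sym p q 0 y = 0" "jassoc_sym p q r 0 = 0"
  by (simp_all add: jassoc_sym_def jassoc_def)

lemma jassoc_sym_polarization:
  assumes "fin_supp x1" "fin_supp x2" "fin_supp x3" "fin_supp y"
  shows "jassoc_sym x1 x2 x3 y = jassoc (x1 + x2 + x3) (x1 + x2 + x3) (x1 + x2 + x3) y
     - jassoc (x1 + x2) (x1 + x2) (x1 + x2) y - jassoc (x1 + x3) (x1 + x3) (x1 + x3) y
     - jassoc (x2 + x3) (x2 + x3) (x2 + x3) y + jassoc x1 x1 x1 y + jassoc x2 x2 x2 y + jassoc x3 x3 x3 y"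
  unfolding jassoc_sym_def using assms by (simp add: jassoc_add fin_supp_add algebra_simps)

lemma jassoc_diag_eq_seq_scale_jassoc_sym: "jassoc x x x y = seq_scale (1 / 6) (jassoc_sym x x x y)"
proof -
  have "sc 6 v = v + v + v + v + v + v" for v
  proof -
    have "(6 :: 'k) = 1 + 1 + 1 + 1 + 1 + 1" by simp
    then show ?thesis by (simp only: scale_left_distrib scale_one)
  qed
  then have "sc (1 / 6) (v + v + v + v + v + v) = v" for v
    by (metis scale_scale scale_one nonzero_divide_eq_eq times_divide_eq_left zero_neq_numeral)
  then show ?thesis
    by (simp add: seq_scale_def jassoc_sym_def fun_eq_iff)
qed

lemma jassoc_sym_in_rel_of_lmonom:
  assumes lmonom: "\<And>a b c d n m l k. jassoc_sym (lmonom a n) (lmonom b m) (lmonom c l) (lmonom d k) \<in> rel"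
    and fin: "fin_supp x1" "fin_supp x2" "fin_supp x3" "fin_supp y"
  shows "jassoc_sym x1 x2 x3 y \<in> rel"
proof -
  have lmonom3: "jassoc_sym (lmonom a n) (lmonom b m) (lmonom c l) y \<in> rel" for a b c n m l
    by (rule fin_supp_additive_closed[OF fin(4), where F = "jassoc_sym _ _ _"])
       (simp_all add: jassoc_sym_add jassoc_sym_zero rel_add lmonom)
  have lmonom2: "jassoc_sym (lmonom a n) (lmonom b m) x3 y \<in> rel" for a b n m
    by (rule fin_supp_additive_closed[OF fin(3), where F = "\<lambda>x. jassoc_sym _ _ x y"])
       (simp_all add: jassoc_sym_add jassoc_sym_zero rel_add lmonom3 fin)
  have lmonom1: "jassoc_sym (lmonom a n) x2 x3 y \<in> rel" for a n
    by (rule fin_supp_additive_closed[OF fin(2), where F = "\<lambda>x. jassoc_sym _ x x3 y"])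
       (simp_all add: jassoc_sym_add jassoc_sym_zero rel_add lmonom2 fin)
  show ?thesis
    by (rule fin_supp_additive_closed[OF fin(1), where F = "\<lambda>x. jassoc_sym x x2 x3 y"])
       (simp_all add: jassoc_sym_add jassoc_sym_zero rel_add lmonom1 fin)
qed

section \<open>Products of four monomials\<close>

lemma fin_supp_coeff_mul_lmonom_series:
  "fin_supp (series_from (k + r) (\<lambda>w. sc (of_int k gchoose w) (pr w a b)))"
  using fin_supp_coeff_mul[OF fin_supp_lmonom fin_supp_lmonom] unfolding coeff_mul_lmonom .

lemma coeff_mul_lmonom_nested_right:
  "lmonom x1 p1 \<star> (lmonom x2 p2 \<star> (lmonom x3 p3 \<star> lmonom x4 p4)) = series_from (p1 + (p2 + (p3 + p4)))
     (\<lambda>w. \<Sum>(u, s, t)\<in>compositions3 w. sc ((of_int p1 gchoose u) * (of_int p2 gchoose s) * (of_int p3 gchoose t))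
        (pr u x1 (pr s x2 (pr t x3 x4))))"
proof -
  have inner: "lmonom x2 p2 \<star> (lmonom x3 p3 \<star> lmonom x4 p4) = series_from (p2 + (p3 + p4))
      (\<lambda>v'. \<Sum>v\<le>v'. sc (of_int p2 gchoose (v' - v)) (pr (v' - v) x2 (sc (of_int p3 gchoose v) (pr v x3 x4))))"
    unfolding coeff_mul_lmonom by (rule coeff_mul_lmonom_series_from[OF fin_supp_coeff_mul_lmonom_series])
  have "fin_supp (lmonom x2 p2 \<star> (lmonom x3 p3 \<star> lmonom x4 p4))"
    by (intro fin_supp_coeff_mul fin_supp_lmonom)
  then show ?thesis
    unfolding inner
    by (subst coeff_mul_lmonom_series_from)
       (simp_all add: pr_right.sum pr_right.scale scale_sum_right mult.assoc
         sum_nested_eq_sum_compositions3[symmetric])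
qed

lemma coeff_mul_lmonom_pairs_coeff:
  "(\<Sum>v1\<le>w. \<Sum>v2\<le>w - v1. sc (of_int (p1 + p2 - int v1) gchoose (w - v1 - v2))
      (pr (w - v1 - v2) (sc (of_int p1 gchoose v1) (pr v1 x1 x2)) (sc (of_int p3 gchoose v2) (pr v2 x3 x4))))
   = (\<Sum>(u, s, t)\<in>compositions3 w. sc ((of_int p1 gchoose u) * (of_int p2 gchoose s) * (of_int p3 gchoose t))
        (\<Sum>i\<le>u. sc (of_nat (u choose i)) (pr (s + i) (pr (u - i) x1 x2) (pr t x3 x4))))"
  (is "?lhs = ?rhs")
proof -
  define H where "H u s t i = sc ((of_int p1 gchoose u) * (of_int p2 gchoose s) * (of_int p3 gchoose t)
    * of_nat (u choose i)) (pr (s + i) (pr (u - i) x1 x2) (pr t x3 x4))" for u s t i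
  have "?rhs = (\<Sum>(u, s, t)\<in>compositions3 w. \<Sum>i\<le>u. H u s t i)"
    unfolding H_def by (simp add: scale_sum_right split_def)
  also have "\<dots> = (\<Sum>v1\<le>w. \<Sum>v2\<le>w - v1. \<Sum>i\<le>w - v1 - v2. H (v1 + i) (w - v1 - v2 - i) v2 i)"
    by (rule sum_nested_eq_sum_compositions3_split1[symmetric])
  also have "\<dots> = ?lhs"
  proof (intro sum.cong refl)
    fix v1 v2
    define j where "j = w - v1 - v2"
    have vandermonde: "(of_int (p1 + p2 - int v1) gchoose j) * (of_int p1 gchoose v1)
        = (\<Sum>i\<le>j. (of_int p1 gchoose (v1 + i)) * of_nat ((v1 + i) choose i) * (of_int p2 gchoose (j - i)) :: 'k)"
      using gbinomial_shifted_Vandermonde[of "of_int p1" "of_int p2" v1 j] by simp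
    let ?X = "pr j (pr v1 x1 x2) (pr v2 x3 x4)"
    have "(\<Sum>i\<le>j. H (v1 + i) (j - i) v2 i) = sc ((\<Sum>i\<le>j. (of_int p1 gchoose (v1 + i))
        * of_nat ((v1 + i) choose i) * (of_int p2 gchoose (j - i))) * (of_int p3 gchoose v2)) ?X"
      unfolding H_def scale_sum_left sum_distrib_right by (intro sum.cong refl) (auto simp: mult_ac)
    also have "\<dots> = sc ((of_int (p1 + p2 - int v1) gchoose j) * (of_int p1 gchoose v1) * (of_int p3 gchoose v2)) ?X"
      by (simp only: vandermonde)
    also have "\<dots> = sc (of_int (p1 + p2 - int v1) gchoose j)
        (pr j (sc (of_int p1 gchoose v1) (pr v1 x1 x2)) (sc (of_int p3 gchoose v2) (pr v2 x3 x4)))"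
      by (simp add: pr_left.scale pr_right.scale mult_ac)
    finally have "(\<Sum>i\<le>j. H (v1 + i) (j - i) v2 i) = \<dots>" .
    then show "(\<Sum>i\<le>w - v1 - v2. H (v1 + i) (w - v1 - v2 - i) v2 i)
      = sc (of_int (p1 + p2 - int v1) gchoose (w - v1 - v2))
        (pr (w - v1 - v2) (sc (of_int p1 gchoose v1) (pr v1 x1 x2)) (sc (of_int p3 gchoose v2) (pr v2 x3 x4)))"
      unfolding j_def by (simp add: diff_diff_add)
  qed
  finally show ?thesis ..
qed

lemma coeff_mul_lmonom_pairs:
  "(lmonom x1 p1 \<star> lmonom x2 p2) \<star> (lmonom x3 p3 \<star> lmonom x4 p4) = series_from (p1 + p2 + (p3 + p4))
     (\<lambda>w. \<Sum>(u, s, t)\<in>compositions3 w. sc ((of_int p1 gchoose u) * (of_int p2 gchoose s) * (of_int p3 gchoose t))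
        (\<Sum>i\<le>u. sc (of_nat (u choose i)) (pr (s + i) (pr (u - i) x1 x2) (pr t x3 x4))))"
  unfolding coeff_mul_lmonom
  by (subst coeff_mul_series_from[OF fin_supp_coeff_mul_lmonom_series fin_supp_coeff_mul_lmonom_series])
     (simp only: coeff_mul_lmonom_pairs_coeff)

lemma coeff_mul_lmonom_nested_middle_coeff:
  "(\<Sum>v'\<le>(w :: nat). sc (of_int (p2 + (p1 + p3) - int v') gchoose (w - v'))
      (pr (w - v') (\<Sum>v\<le>v'. sc (of_int p2 gchoose (v' - v))
        (pr (v' - v) x2 (sc (of_int p1 gchoose v) (pr v x1 x3)))) x4))
   = (\<Sum>(u, s, t)\<in>compositions3 w. sc ((of_int p1 gchoose u) * (of_int p2 gchoose s) * (of_int p3 gchoose t))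
        (\<Sum>s1\<le>u. \<Sum>s2\<le>s. sc (of_nat ((u choose s1) * (s choose s2)))
          (pr (t + s1 + s2) (pr (s - s2) x2 (pr (u - s1) x1 x3)) x4)))"
  (is "?lhs = ?rhs")
proof -
  define H where "H u s t s1 s2 = sc ((of_int p1 gchoose u) * (of_int p2 gchoose s) * (of_int p3 gchoose t)
    * of_nat ((u choose s1) * (s choose s2))) (pr (t + s1 + s2) (pr (s - s2) x2 (pr (u - s1) x1 x3)) x4)"
    for u s t s1 s2
  have "?rhs = (\<Sum>(u, s, t)\<in>compositions3 w. \<Sum>s1\<le>u. \<Sum>s2\<le>s. H u s t s1 s2)"
    unfolding H_def by (simp add: scale_sum_right split_def)
  also have "\<dots> = (\<Sum>v'\<le>w. \<Sum>v\<le>v'. \<Sum>i\<le>w - v'. \<Sum>j\<le>w - v' - i. H (v + i) (v' - v + j) (w - v' - i - j) i j)"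
    by (rule sum_nested_eq_sum_compositions3_split2[symmetric])
  also have "\<dots> = (\<Sum>v'\<le>w. \<Sum>v\<le>v'. sc ((of_int (p2 + (p1 + p3) - int v') gchoose (w - v'))
      * (of_int p2 gchoose (v' - v)) * (of_int p1 gchoose v)) (pr (w - v') (pr (v' - v) x2 (pr v x1 x3)) x4))"
  proof (intro sum.cong refl)
    fix v' v :: nat assume "v \<in> {..v'}"
    define q where "q = v' - v"
    define r where "r = w - v'"
    have v': "v' = v + q" using \<open>v \<in> {..v'}\<close> unfolding q_def by simp
    have "(of_int (p2 + (p1 + p3) - int v') :: 'k) = of_int p1 + of_int p2 + of_int p3 - of_nat (v + q)"
      by (simp add: v')
    then have vandermonde: "(of_int (p2 + (p1 + p3) - int v') gchoose r) * (of_int p1 gchoose v) * (of_int p2 gchoose q)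
        = (\<Sum>i\<le>r. \<Sum>j\<le>r - i. (of_int p1 gchoose (v + i)) * (of_int p2 gchoose (q + j))
            * (of_int p3 gchoose (r - i - j)) * of_nat (((v + i) choose i) * ((q + j) choose j)) :: 'k)"
      by (simp only: gbinomial_shifted_Vandermonde3)
    let ?X = "pr r (pr q x2 (pr v x1 x3)) x4"
    have "(\<Sum>i\<le>r. \<Sum>j\<le>r - i. H (v + i) (q + j) (r - i - j) i j)
        = sc (\<Sum>i\<le>r. \<Sum>j\<le>r - i. (of_int p1 gchoose (v + i)) * (of_int p2 gchoose (q + j))
            * (of_int p3 gchoose (r - i - j)) * of_nat (((v + i) choose i) * ((q + j) choose j))) ?X"
      unfolding H_def scale_sum_left by (intro sum.cong refl) auto
    also have "\<dots> = sc ((of_int (p2 + (p1 + p3) - int v') gchoose r) * (of_int p2 gchoose q) * (of_int p1 gchoose v)) ?X"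
      by (simp only: vandermonde[symmetric]) (simp only: mult_ac)
    finally show "(\<Sum>i\<le>w - v'. \<Sum>j\<le>w - v' - i. H (v + i) (v' - v + j) (w - v' - i - j) i j)
        = sc ((of_int (p2 + (p1 + p3) - int v') gchoose (w - v')) * (of_int p2 gchoose (v' - v))
            * (of_int p1 gchoose v))
            (pr (w - v') (pr (v' - v) x2 (pr v x1 x3)) x4)"
      unfolding q_def r_def by (simp add: add.commute)
  qed
  also have "\<dots> = ?lhs"
    by (simp add: pr_left.sum pr_left.scale pr_right.scale scale_sum_right mult_ac)
  finally show ?thesis ..
qed

lemma coeff_mul_lmonom_nested_middle:
  "(lmonom x2 p2 \<star> (lmonom x1 p1 \<star> lmonom x3 p3)) \<star> lmonom x4 p4 = series_from (p2 + (p1 + p3) + p4)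
     (\<lambda>w. \<Sum>(u, s, t)\<in>compositions3 w. sc ((of_int p1 gchoose u) * (of_int p2 gchoose s) * (of_int p3 gchoose t))
        (\<Sum>s1\<le>u. \<Sum>s2\<le>s. sc (of_nat ((u choose s1) * (s choose s2)))
          (pr (t + s1 + s2) (pr (s - s2) x2 (pr (u - s1) x1 x3)) x4)))"
proof -
  have inner: "lmonom x2 p2 \<star> (lmonom x1 p1 \<star> lmonom x3 p3) = series_from (p2 + (p1 + p3))
      (\<lambda>v'. \<Sum>v\<le>v'. sc (of_int p2 gchoose (v' - v)) (pr (v' - v) x2 (sc (of_int p1 gchoose v) (pr v x1 x3))))"
    unfolding coeff_mul_lmonom by (rule coeff_mul_lmonom_series_from[OF fin_supp_coeff_mul_lmonom_series])
  have "fin_supp (lmonom x2 p2 \<star> (lmonom x1 p1 \<star> lmonom x3 p3))"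
    by (intro fin_supp_coeff_mul fin_supp_lmonom)
  then show ?thesis
    unfolding inner by (subst coeff_mul_series_from_lmonom) (simp_all only: coeff_mul_lmonom_nested_middle_coeff)
qed

section \<open>The Jordan identity in terms of n-products\<close>

definition jordan_lhs :: "'c \<Rightarrow> 'c \<Rightarrow> 'c \<Rightarrow> 'c \<Rightarrow> nat \<Rightarrow> nat \<Rightarrow> nat \<Rightarrow> 'c" where
  "jordan_lhs a b c d n m l =
     pr n a (pr m b (pr l c d))
     + (\<Sum>s1\<le>n. \<Sum>s2\<le>m. sc (of_nat ((n choose s1) * (m choose s2)))
          (pr (l + s1 + s2) (pr (m - s2) b (pr (n - s1) a c)) d))
     + pr l c (pr m b (pr n a d))"

definition jordan_rhs :: "'c \<Rightarrow> 'c \<Rightarrow> 'c \<Rightarrow> 'c \<Rightarrow> nat \<Rightarrow> nat \<Rightarrow> nat \<Rightarrow> 'c" where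
  "jordan_rhs a b c d n m l =
     (\<Sum>s\<le>n. sc (of_nat (n choose s)) (pr (m + s) (pr (n - s) a b) (pr l c d)))
     + (\<Sum>s\<le>n. sc (of_nat (n choose s)) (pr (l + s) (pr (n - s) a c) (pr m b d)))
     + (\<Sum>s\<le>l. sc (of_nat (l choose s)) (pr (m + s) (pr (l - s) c b) (pr n a d)))"

lemma lin_jordan_lmonom:
  "lin_jordan (lmonom a n) (lmonom b m) (lmonom c l) (lmonom d k) = series_from (n + m + l + k)
     (\<lambda>w. \<Sum>(u, s, t)\<in>compositions3 w. sc ((of_int n gchoose u) * (of_int m gchoose s) * (of_int l gchoose t))
        (jordan_lhs a b c d u s t - jordan_rhs a b c d u s t))"
proof -
  let ?g = "\<lambda>u s t. (of_int n gchoose u) * (of_int m gchoose s) * (of_int l gchoose t) :: 'k"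
  have abcd: "lmonom a n \<star> (lmonom b m \<star> (lmonom c l \<star> lmonom d k)) = series_from (n + m + l + k)
      (\<lambda>w. \<Sum>(u, s, t)\<in>compositions3 w. sc (?g u s t) (pr u a (pr s b (pr t c d))))"
    unfolding coeff_mul_lmonom_nested_right by (rule series_from_cong) simp_all
  have bacd: "(lmonom b m \<star> (lmonom a n \<star> lmonom c l)) \<star> lmonom d k = series_from (n + m + l + k)
      (\<lambda>w. \<Sum>(u, s, t)\<in>compositions3 w. sc (?g u s t) (\<Sum>s1\<le>u. \<Sum>s2\<le>s.
         sc (of_nat ((u choose s1) * (s choose s2))) (pr (t + s1 + s2) (pr (s - s2) b (pr (u - s1) a c)) d)))"
    unfolding coeff_mul_lmonom_nested_middle by (rule series_from_cong) simp_all
  have cbad: "lmonom c l \<star> (lmonom b m \<star> (lmonom a n \<star> lmonom d k)) = series_from (n + m + l + k)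
      (\<lambda>w. \<Sum>(u, s, t)\<in>compositions3 w. sc (?g u s t) (pr t c (pr s b (pr u a d))))"
    unfolding coeff_mul_lmonom_nested_right
    by (rule series_from_cong) (simp, subst sum_compositions3_swap13, simp add: mult_ac)
  have ab_cd: "(lmonom a n \<star> lmonom b m) \<star> (lmonom c l \<star> lmonom d k) = series_from (n + m + l + k)
      (\<lambda>w. \<Sum>(u, s, t)\<in>compositions3 w. sc (?g u s t)
        (\<Sum>i\<le>u. sc (of_nat (u choose i)) (pr (s + i) (pr (u - i) a b) (pr t c d))))"
    unfolding coeff_mul_lmonom_pairs by (rule series_from_cong) simp_all
  have ac_bd: "(lmonom a n \<star> lmonom c l) \<star> (lmonom b m \<star> lmonom d k) = series_from (n + m + l + k)
      (\<lambda>w. \<Sum>(u, s, t)\<in>compositions3 w. sc (?g u s t)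
        (\<Sum>i\<le>u. sc (of_nat (u choose i)) (pr (t + i) (pr (u - i) a c) (pr s b d))))"
    unfolding coeff_mul_lmonom_pairs
    by (rule series_from_cong) (simp, subst sum_compositions3_swap23, simp add: mult_ac)
  have cb_ad: "(lmonom c l \<star> lmonom b m) \<star> (lmonom a n \<star> lmonom d k) = series_from (n + m + l + k)
      (\<lambda>w. \<Sum>(u, s, t)\<in>compositions3 w. sc (?g u s t)
        (\<Sum>i\<le>t. sc (of_nat (t choose i)) (pr (s + i) (pr (t - i) c b) (pr u a d))))"
    unfolding coeff_mul_lmonom_pairs
    by (rule series_from_cong) (simp, subst sum_compositions3_swap13, simp add: mult_ac)
  show ?thesis
    unfolding lin_jordan_def abcd bacd cbad ab_cd ac_bd cb_ad series_from_add series_from_diff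
    by (rule series_from_cong)
       (simp_all add: jordan_lhs_def jordan_rhs_def split_def scale_right_distrib scale_right_diff_distrib
         sum.distrib sum_subtractf)
qed

lemma lin_jordan_lmonom_coeff:
  assumes "j \<le> -1"
  shows "lin_jordan (lmonom a (int n)) (lmonom b (int m)) (lmonom c (int l)) (lmonom d (-1)) j
    = (if j = -1 then jordan_lhs a b c d n m l - jordan_rhs a b c d n m l else 0)"
proof -
  have "n + m + l \<le> nat (int n + int m + int l + -1 - j)"
    and "nat (int n + int m + int l + -1 - j) = n + m + l \<longleftrightarrow> j = -1"
    using assms by linarith+
  then show ?thesis
    unfolding lin_jordan_lmonom series_from_def
    using sum_compositions3_binomial_top assms by (simp add: binomial_gbinomial[symmetric])
qed

end

locale commutative_conformal = conformal +
  assumes coeff_commutative: "coeff_commutative sc D pr"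
begin

lemma coeff_mul_commute_rel: "fin_supp f \<Longrightarrow> fin_supp g \<Longrightarrow> f \<star> g - g \<star> f \<in> rel"
  using coeff_commutative unfolding coeff_commutative_def fun_diff_def by blast

lemma coeff_mul_cong_left:
  assumes "x - y \<in> rel" "fin_supp x" "fin_supp y" "fin_supp z"
  shows "x \<star> z = y \<star> z"
  using coeff_mul_rel_left[OF assms(1,4)] coeff_mul_diff_left[OF assms(2-4)] by simp

lemma coeff_mul_commute_left:
  "fin_supp x \<Longrightarrow> fin_supp y \<Longrightarrow> fin_supp z \<Longrightarrow> (x \<star> y) \<star> z = (y \<star> x) \<star> z"
  by (intro coeff_mul_cong_left coeff_mul_commute_rel fin_supp_coeff_mul)

lemma coeff_mul_commute_nested_rel:
  assumes "fin_supp x" "fin_supp y" "fin_supp z"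
  shows "(x \<star> y) \<star> z - z \<star> (y \<star> x) \<in> rel"
proof -
  have "(x \<star> y) \<star> z - z \<star> (x \<star> y) \<in> rel"
    using assms by (simp add: coeff_mul_commute_rel fin_supp_coeff_mul)
  moreover have "z \<star> (x \<star> y) - z \<star> (y \<star> x) \<in> rel"
    using coeff_mul_rel_right[OF coeff_mul_commute_rel[OF assms(1,2)] assms(3)] assms
    by (simp add: coeff_mul_diff_right fin_supp_coeff_mul)
  ultimately show ?thesis
    using rel_add by fastforce
qed

lemma coeff_mul_commute_pairs_rel:
  assumes "fin_supp x" "fin_supp y" "fin_supp z" "fin_supp w"
  shows "(x \<star> y) \<star> (z \<star> w) - (w \<star> z) \<star> (x \<star> y) \<in> rel"
  using coeff_mul_commute_rel[of "x \<star> y" "z \<star> w"] coeff_mul_commute_left[of z w "x \<star> y"] assms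
  by (simp add: fin_supp_coeff_mul)

text \<open>Commutativity pairs the six permutations off; it may be applied inside products because
  \<open>rel \<star> _ = 0\<close> and \<open>_ \<star> rel \<subseteq> rel\<close>.\<close>

lemma jassoc_sym_eq_lin_jordan_mod_rel:
  assumes fin: "fin_supp a" "fin_supp b" "fin_supp c" "fin_supp d"
  shows "jassoc_sym a c d b - (lin_jordan a b c d + lin_jordan a b c d) \<in> rel"
proof -
  note fin' = fin fin_supp_coeff_mul[OF fin(1,3)] fin_supp_coeff_mul[OF fin(1,4)] fin_supp_coeff_mul[OF fin(3,4)]
    fin_supp_coeff_mul[OF fin(2,3)]
  have exact: "((a \<star> c) \<star> b) \<star> d = (b \<star> (a \<star> c)) \<star> d" "((c \<star> a) \<star> b) \<star> d = (b \<star> (a \<star> c)) \<star> d"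
      "((d \<star> a) \<star> b) \<star> c = ((a \<star> d) \<star> b) \<star> c" "((d \<star> c) \<star> b) \<star> a = ((c \<star> d) \<star> b) \<star> a"
      "(c \<star> a) \<star> (b \<star> d) = (a \<star> c) \<star> (b \<star> d)" "(d \<star> a) \<star> (b \<star> c) = (a \<star> d) \<star> (b \<star> c)"
      "(d \<star> c) \<star> (b \<star> a) = (c \<star> d) \<star> (b \<star> a)"
    using fin' by (simp_all add: coeff_mul_commute_left fin_supp_coeff_mul)
  define E1 where "E1 = ((a \<star> d) \<star> b) \<star> c - c \<star> (b \<star> (a \<star> d))"
  define E2 where "E2 = ((c \<star> d) \<star> b) \<star> a - a \<star> (b \<star> (c \<star> d))"
  define E3 where "E3 = (a \<star> d) \<star> (b \<star> c) - (c \<star> b) \<star> (a \<star> d)"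
  define E4 where "E4 = (c \<star> d) \<star> (b \<star> a) - (a \<star> b) \<star> (c \<star> d)"
  have "E1 \<in> rel" "E2 \<in> rel" "E3 \<in> rel" "E4 \<in> rel"
    unfolding E1_def E2_def E3_def E4_def using fin'
    by (simp_all add: coeff_mul_commute_nested_rel coeff_mul_commute_pairs_rel)
  moreover have "jassoc_sym a c d b - (lin_jordan a b c d + lin_jordan a b c d)
      = (E1 + E1) + (E2 + E2) - (E3 + E3) - (E4 + E4)"
    unfolding jassoc_sym_def jassoc_def lin_jordan_def exact E1_def E2_def E3_def E4_def
    by (simp add: algebra_simps)
  ultimately show ?thesis
    by (simp add: rel_add rel_diff)
qed

lemma lin_jordan_in_rel_of_coeff_jordan:
  assumes jordan: "coeff_jordan sc D pr" and fin: "fin_supp a" "fin_supp b" "fin_supp c" "fin_supp d"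
  shows "lin_jordan a b c d \<in> rel"
proof -
  have "jassoc x x x y \<in> rel" if "fin_supp x" "fin_supp y" for x y
    using jordan that unfolding coeff_jordan_iff by blast
  then have "jassoc_sym a c d b \<in> rel"
    unfolding jassoc_sym_polarization[OF fin(1,3,4,2)] using fin
    by (simp add: rel_add rel_diff fin_supp_add)
  then have "jassoc_sym a c d b - (jassoc_sym a c d b - (lin_jordan a b c d + lin_jordan a b c d)) \<in> rel"
    using jassoc_sym_eq_lin_jordan_mod_rel[OF fin] by (rule rel_diff)
  then have "lin_jordan a b c d + lin_jordan a b c d \<in> rel"
    by simp
  then have "seq_scale (1 / 2) (lin_jordan a b c d + lin_jordan a b c d) \<in> rel"
    by (rule rel_seq_scale)
  moreover have "seq_scale (1 / 2) (x + x) = x" for x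
  proof -
    have "sc (1 / 2) (v + v) = sc (1 / 2 + 1 / 2) v" for v
      by (simp only: scale_right_distrib scale_left_distrib)
    then show ?thesis by (simp add: seq_scale_def fun_eq_iff)
  qed
  ultimately show ?thesis by simp
qed

lemma jordan_identity_of_coeff_jordan:
  assumes "coeff_jordan sc D pr"
  shows "jordan_lhs a b c d n m l = jordan_rhs a b c d n m l"
proof -
  let ?Q = "lin_jordan (lmonom a (int n)) (lmonom b (int m)) (lmonom c (int l)) (lmonom d (-1))"
  have "?Q \<in> rel"
    using assms by (simp add: lin_jordan_in_rel_of_coeff_jordan)
  then have "?Q (-1) = 0"
    by (rule rel_residue_eq_zero) (simp add: lin_jordan_lmonom_coeff)
  then show ?thesis
    by (simp add: lin_jordan_lmonom_coeff)
qed

lemma coeff_jordan_of_jordan_identity: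
  assumes "\<And>a b c d n m l. jordan_lhs a b c d n m l = jordan_rhs a b c d n m l"
  shows "coeff_jordan sc D pr"
proof -
  have "lin_jordan (lmonom a n) (lmonom b m) (lmonom c l) (lmonom d k) = 0" for a b c d n m l k
    unfolding lin_jordan_lmonom assms by simp
  then have "jassoc_sym (lmonom a n) (lmonom c l) (lmonom d k) (lmonom b m) \<in> rel" for a b c d n m l k
    using jassoc_sym_eq_lin_jordan_mod_rel[of "lmonom a n" "lmonom b m" "lmonom c l" "lmonom d k"] by simp
  then have "jassoc_sym x x x y \<in> rel" if "fin_supp x" "fin_supp y" for x y
    using jassoc_sym_in_rel_of_lmonom that by blast
  then have "jassoc x x x y \<in> rel" if "fin_supp x" "fin_supp y" for x y
    unfolding jassoc_diag_eq_seq_scale_jassoc_sym using that by (simp add: rel_seq_scale)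
  then show ?thesis
    unfolding coeff_jordan_iff using coeff_commutative by blast
qed

end

theorem proposition3p4:
  fixes sc :: "'k::field_char_0 \<Rightarrow> 'c::ab_group_add \<Rightarrow> 'c"
    and D :: "'c \<Rightarrow> 'c"
    and pr :: "nat \<Rightarrow> 'c \<Rightarrow> 'c \<Rightarrow> 'c"
  assumes "conformal_algebra sc D pr"
    and "coeff_commutative sc D pr"
  shows "coeff_jordan sc D pr \<longleftrightarrow>
    (\<forall>a b c d n m l.
       pr n a (pr m b (pr l c d))
       + (\<Sum>s1\<le>n. \<Sum>s2\<le>m. sc (of_nat ((n choose s1) * (m choose s2)))
            (pr (l + s1 + s2) (pr (m - s2) b (pr (n - s1) a c)) d))
       + pr l c (pr m b (pr n a d))
     = (\<Sum>s\<le>n. sc (of_nat (n choose s)) (pr (m + s) (pr (n - s) a b) (pr l c d)))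
       + (\<Sum>s\<le>n. sc (of_nat (n choose s)) (pr (l + s) (pr (n - s) a c) (pr m b d)))
       + (\<Sum>s\<le>l. sc (of_nat (l choose s)) (pr (m + s) (pr (l - s) c b) (pr n a d))))"
proof -
  interpret commutative_conformal sc D pr
    using assms by (intro commutative_conformal.intro conformal.intro commutative_conformal_axioms.intro)
  show ?thesis
    using jordan_identity_of_coeff_jordan coeff_jordan_of_jordan_identity
    unfolding jordan_lhs_def jordan_rhs_def by blast
qed

end
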